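(* Let $\Phi(u,v)=P(u)(1-v)F(u,uv)$ for $(u,v)\in\mathbb{D}^2$. Then $\Phi$ satisfies, for $u\ne0$, the inhomogeneous linear PDE $$\frac{\partial\Phi}{\partial u}-\frac{u-q}{P(u)}\,v(1-v)\frac{\partial\Phi}{\partial v}+\mathcal{L}(u,v)=0,$$ where $$\mathcal{L}(u,v)=(1-v)\frac{L(u,uv)}{u}=(1-v)\left(\frac{v}{1-u}+(1+v)E(q,uv)-v(s+1+\rho-uv)\frac{\partial E}{\partial v}(q,uv)\right).$$
   Context: Queueing model: an $M^{[X]}/M/1$ processor-sharing queue with Poisson batch arrivals of rate $\rho>0$, exponential job services of mean $1$, unit capacity shared equally among all jobs present, all random quantities independent; batch sizes geometric $\mathbb{P}(B=b)=(1-q)q^{b-1}$, $b\ge1$, with $q\in(0,1)$, $\rho+q<1$. For $n\ge0,b\ge1$, $\Omega_{n,b}$ is the sojourn time of a tagged batch (arrival to departure of its last job) given $n$ jobs present at its arrival and batch size $b$; $e^*_{n,b}(s)=\mathbb{E}(e^{-s\Omega_{n,b}})$, $\Re(s)\ge0$ fixed and suppressed from notation. $\mathbb{D}$ is the open unit disk; $E(u,v)=\sum_{n\ge0}\sum_{b\ge1}e^*_{n,b}(s)u^nv^b$; $F(u,v)=\frac{E(u,v)-E(q,v)}{u-q}$ for $u\ne q$, $F(q,v)=\frac{\partial E}{\partial u}(q,v)$; $P(u)=u^2-(s+1+\rho+q)u+sq+\rho+q$; $L(u,v)=\frac{v}{1-u}+(u+v)E(q,v)-v(s+1+\rho-v)\frac{\partial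 E}{\partial v}(q,v)$. *)

theory Defs
  imports "HOL-Analysis.Analysis"
begin

text \<open>Sojourn time of a tagged batch in the M^[X]/M/1 PS queue, geometric batches.
  While the tagged batch is present the system is non-empty, so the total event rate is
  constant, rho + 1 (arrivals at rate rho, one service completion at rate 1 shared equally).
  State (m, j): m other jobs, j remaining tagged jobs.  From (m,j), j >= 1:
   - batch arrival of size c+1 (prob. rho/(1+rho) * (1-q) q^c): go to (m+c+1, j);
   - completion of an untagged job (prob. 1/(1+rho) * m/(m+j)): go to (m-1, j);
   - completion of a tagged job (prob. 1/(1+rho) * j/(m+j)): go to (m, j-1).
  hit rho q k m j = probability that the tagged batch leaves at exactly the k-th event.\<close>

primrec hit :: "real \<Rightarrow> real \<Rightarrow> nat \<Rightarrow> nat \<Rightarrow> nat \<Rightarrow> real" where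
  "hit \<rho> q 0 m j = (if j = 0 then 1 else 0)"
| "hit \<rho> q (Suc k) m j =
     (if j = 0 then 0 else
        \<rho> / (1 + \<rho>) * (\<Sum>c. (1 - q) * q ^ c * hit \<rho> q k (m + c + 1) j)
      + 1 / (1 + \<rho>) * (real m / real (m + j) * hit \<rho> q k (m - 1) j
                          + real j / real (m + j) * hit \<rho> q k m (j - 1)))"

text \<open>Laplace--Stieltjes transform e*_{n,b}(s) = E(exp(-s Omega_{n,b})): the sojourn time is
  a sum of N i.i.d. Exp(rho+1) holding times (N = number of events until departure),
  independent of the embedded jump chain, so its LST is E[((1+rho)/(1+rho+s))^N].\<close>

definition estar :: "real \<Rightarrow> real \<Rightarrow> complex \<Rightarrow> nat \<Rightarrow> nat \<Rightarrow> complex" where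
  "estar \<rho> q s n b =
     (\<Sum>k. complex_of_real (hit \<rho> q k n b) * (of_real (1 + \<rho>) / (of_real (1 + \<rho>) + s)) ^ k)"

definition EE :: "real \<Rightarrow> real \<Rightarrow> complex \<Rightarrow> complex \<Rightarrow> complex \<Rightarrow> complex" where
  "EE \<rho> q s u v = (\<Sum>n. \<Sum>b. estar \<rho> q s n (Suc b) * u ^ n * v ^ (Suc b))"

definition FF :: "real \<Rightarrow> real \<Rightarrow> complex \<Rightarrow> complex \<Rightarrow> complex \<Rightarrow> complex" where
  "FF \<rho> q s u v =
     (if u = of_real q then deriv (\<lambda>w. EE \<rho> q s w v) (of_real q)
      else (EE \<rho> q s u v - EE \<rho> q s (of_real q) v) / (u - of_real q))"

definition PP :: "real \<Rightarrow> real \<Rightarrow> complex \<Rightarrow> complex \<Rightarrow> complex" where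
  "PP \<rho> q s u = u\<^sup>2 - (s + 1 + of_real \<rho> + of_real q) * u + s * of_real q + of_real \<rho> + of_real q"

definition LL :: "real \<Rightarrow> real \<Rightarrow> complex \<Rightarrow> complex \<Rightarrow> complex \<Rightarrow> complex" where
  "LL \<rho> q s u v = v / (1 - u) + (u + v) * EE \<rho> q s (of_real q) v
     - v * (s + 1 + of_real \<rho> - v) * deriv (\<lambda>w. EE \<rho> q s (of_real q) w) v"

definition Phi :: "real \<Rightarrow> real \<Rightarrow> complex \<Rightarrow> complex \<Rightarrow> complex \<Rightarrow> complex" where
  "Phi \<rho> q s u v = PP \<rho> q s u * (1 - v) * FF \<rho> q s u (u * v)"

definition calL :: "real \<Rightarrow> real \<Rightarrow> complex \<Rightarrow> complex \<Rightarrow> complex \<Rightarrow> complex" where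
  "calL \<rho> q s u v = (1 - v) * LL \<rho> q s u (u * v) / u"

end

theory Submission
  imports Defs "HOL-Complex_Analysis.Cauchy_Integral_Formula"
begin

text \<open>
  First-step analysis of the tagged batch (the next event is an arrival, or the departure of an
  untagged or of a tagged job) gives, for \<open>b \<ge> 1\<close>,
  \<open>(1 + \<rho> + s) (n + b) e(n,b) = \<rho> (1 - q) (n + b) f(n,b) + n e(n - 1,b) + b e(n,b - 1)\<close>
  with \<open>f(n,b) = (\<Sum>c. q^c e(n + c + 1,b))\<close>, and these \<open>f(n,b)\<close> are exactly the coefficients of
  \<open>F(u,v) = (E(u,v) - E(q,v)) / (u - q)\<close>. Since \<open>|e(n,b)| \<le> 1\<close>, all generating functions
  converge absolutely on the bidisc, and multiplying the recurrence by \<open>u^n v^b\<close> and summing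
  turns it into a first-order linear PDE coupling \<open>E\<close> and \<open>F\<close>. Substituting
  \<open>E(u,w) = E(q,w) + (u - q) F(u,w)\<close> leaves a PDE for \<open>F(u,w)\<close> alone, which becomes the
  equation for \<open>\<Phi>\<close> after the change of variables \<open>w = u v\<close>.
\<close>

section \<open>Double series and power series with bounded coefficients\<close>

lemma suminf_eq_infsum_nat:
  fixes f :: "nat \<Rightarrow> 'a::banach"
  assumes "f summable_on UNIV"
  shows "suminf f = infsum f UNIV"
  using has_sum_imp_sums[OF has_sum_infsum[OF assms]] by (simp add: sums_iff)

lemma suminf_swap:
  fixes c :: "nat \<Rightarrow> nat \<Rightarrow> 'a::banach"
  assumes rows: "\<And>n. summable (\<lambda>m. norm (c n m))"
    and total: "summable (\<lambda>n. \<Sum>m. norm (c n m))"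
  shows "(\<Sum>n. \<Sum>m. c n m) = (\<Sum>m. \<Sum>n. c n m)"
proof -
  have S: "(\<lambda>(n, m). c n m) summable_on UNIV \<times> UNIV"
  proof (rule abs_summable_summable, rule iffD2[OF Infinite_Sum.abs_summable_on_Sigma_iff], intro conjI ballI)
    show "(\<lambda>m. norm (case (n, m) of (n, m) \<Rightarrow> c n m)) summable_on UNIV" for n
      using rows[of n] by (simp add: summable_on_UNIV_nonneg_real_iff)
    have "summable (\<lambda>n. norm (\<Sum>m. norm (c n m)))"
      using total by (simp add: suminf_nonneg[OF rows])
    then show "(\<lambda>n. norm (\<Sum>\<^sub>\<infinity>m. norm (case (n, m) of (n, m) \<Rightarrow> c n m))) summable_on UNIV"
      using rows by (simp add: summable_on_UNIV_nonneg_real_iff suminf_eq_infsum_nat)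
  qed
  then have S': "(\<lambda>(m, n). c n m) summable_on UNIV \<times> UNIV"
    by (subst summable_on_swap) (simp add: case_prod_unfold)
  have cols: "summable (\<lambda>n. norm (c n m))" for m
    by (rule summable_comparison_test'[OF total]) (use sum_le_suminf[OF rows, of "{m}"] in simp)
  have "(\<Sum>n. \<Sum>m. c n m) = (\<Sum>\<^sub>\<infinity>n. \<Sum>\<^sub>\<infinity>m. c n m)"
    using norm_summable_imp_summable_on[OF rows] summable_on_Sigma_banach[OF S]
    by (simp add: suminf_eq_infsum_nat)
  also have "\<dots> = (\<Sum>\<^sub>\<infinity>m. \<Sum>\<^sub>\<infinity>n. c n m)"
    by (rule infsum_swap_banach[OF S])
  also have "\<dots> = (\<Sum>m. \<Sum>n. c n m)"
    using norm_summable_imp_summable_on[OF cols] summable_on_Sigma_banach[OF S']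
    by (simp add: suminf_eq_infsum_nat)
  finally show ?thesis .
qed

lemma norm_mult_less_1: "norm x < 1 \<Longrightarrow> norm y < 1 \<Longrightarrow> norm (x * y) < 1"
  for x y :: complex
  using mult_left_le[of "norm y" "norm x"] by (simp add: norm_mult)

lemma eventually_nhds_norm_less: "norm x < r \<Longrightarrow> \<forall>\<^sub>F t in nhds x. norm t < r"
  for x :: complex
  using eventually_nhds_in_open[OF open_ball, of x 0 r] by simp

lemma bounded_power_series_summable:
  fixes a :: "nat \<Rightarrow> complex"
  assumes a: "\<And>n. norm (a n) \<le> C" and x: "norm x < 1"
  shows "summable (\<lambda>n. norm (a n * x ^ n))"
proof (rule summable_comparison_test')
  show "summable (\<lambda>n. C * norm x ^ n)"
    using x by (simp add: summable_geometric)
  show "norm (norm (a n * x ^ n)) \<le> C * norm x ^ n" for n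
    using a[of n] by (simp add: norm_mult norm_power mult_right_mono)
qed

lemma bounded_power_series_sums:
  fixes a :: "nat \<Rightarrow> complex"
  assumes "\<And>n. norm (a n) \<le> C" and "norm x < 1"
  shows "(\<lambda>n. a n * x ^ n) sums (\<Sum>n. a n * x ^ n)"
  by (rule summable_sums[OF summable_norm_cancel[OF bounded_power_series_summable[OF assms]]])

lemma bounded_power_series_norm_le:
  fixes a :: "nat \<Rightarrow> complex"
  assumes a: "\<And>n. norm (a n) \<le> C" and x: "norm x < 1"
  shows "norm (\<Sum>n. a n * x ^ n) \<le> C / (1 - norm x)"
proof -
  have geom: "summable (\<lambda>n. C * norm x ^ n)"
    using x by (simp add: summable_geometric)
  have "norm (\<Sum>n. a n * x ^ n) \<le> (\<Sum>n. norm (a n * x ^ n))"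
    by (rule summable_norm[OF bounded_power_series_summable[OF a x]])
  also have "\<dots> \<le> (\<Sum>n. C * norm x ^ n)"
    using a by (intro suminf_le bounded_power_series_summable[OF a x] geom)
      (simp add: norm_mult norm_power mult_right_mono)
  also have "\<dots> = C / (1 - norm x)"
    using x by (simp add: suminf_mult suminf_geometric summable_geometric)
  finally show ?thesis .
qed

lemma bounded_power_series_has_derivative:
  fixes a :: "nat \<Rightarrow> complex"
  assumes a: "\<And>n. norm (a n) \<le> C" and x: "norm x < 1"
  shows "((\<lambda>z. \<Sum>n. a n * z ^ n) has_field_derivative (\<Sum>n. diffs a n * x ^ n)) (at x)"
  by (rule termdiffs_strong'[OF _ x])
     (rule summable_norm_cancel[OF bounded_power_series_summable[OF a]])

lemma bounded_power_series_holomorphic: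
  fixes a :: "nat \<Rightarrow> complex"
  assumes "\<And>n. norm (a n) \<le> C"
  shows "(\<lambda>z. \<Sum>n. a n * z ^ n) holomorphic_on ball 0 1"
proof -
  have "(\<lambda>z. \<Sum>n. a n * z ^ n) field_differentiable at x within ball 0 1" if "x \<in> ball 0 1" for x
    using bounded_power_series_has_derivative[of a C, OF assms that[unfolded mem_ball_0]]
    unfolding field_differentiable_def by (auto intro: has_field_derivative_at_within)
  then show ?thesis
    unfolding holomorphic_on_def by blast
qed

lemma bounded_power_series_Euler:
  fixes a :: "nat \<Rightarrow> complex"
  assumes a: "\<And>n. norm (a n) \<le> C" and x: "norm x < 1"
  shows "(\<lambda>n. of_nat n * a n * x ^ n) sums (x * deriv (\<lambda>z. \<Sum>n. a n * z ^ n) x)"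
proof -
  have "summable (\<lambda>n. diffs a n * x ^ n)"
    by (rule termdiff_converges[OF x])
       (rule summable_norm_cancel[OF bounded_power_series_summable[OF a]])
  then have "(\<lambda>n. x * (diffs a n * x ^ n)) sums (x * deriv (\<lambda>z. \<Sum>n. a n * z ^ n) x)"
    unfolding DERIV_imp_deriv[OF bounded_power_series_has_derivative[OF a x]]
    by (intro sums_mult summable_sums)
  moreover have "(\<lambda>n. x * (diffs a n * x ^ n)) = (\<lambda>n. of_nat (Suc n) * a (Suc n) * x ^ Suc n)"
    by (simp add: diffs_def algebra_simps)
  ultimately have "(\<lambda>n. of_nat (Suc n) * a (Suc n) * x ^ Suc n) sums (x * deriv (\<lambda>z. \<Sum>n. a n * z ^ n) x)"
    by (simp only:)
  then show ?thesis
    by (rule sums_Suc_imp[rotated]) simp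
qed

lemma bounded_power_series_Euler_shift:
  fixes a :: "nat \<Rightarrow> complex"
  assumes a: "\<And>n. norm (a n) \<le> C" and x: "norm x < 1"
  defines "f \<equiv> \<lambda>z. \<Sum>n. a n * z ^ n"
  shows "(\<lambda>n. of_nat n * a (n - 1) * x ^ n) sums (x * (x * deriv f x + f x))"
proof -
  have "(\<lambda>n. x * (of_nat n * a n * x ^ n + a n * x ^ n)) sums (x * (x * deriv f x + f x))"
    unfolding f_def
    by (intro sums_mult sums_add bounded_power_series_Euler[OF a x] summable_sums
        summable_norm_cancel[OF bounded_power_series_summable[OF a x]])
  moreover have "(\<lambda>n. x * (of_nat n * a n * x ^ n + a n * x ^ n))
      = (\<lambda>n. of_nat (Suc n) * a (Suc n - 1) * x ^ Suc n)"
    by (simp add: algebra_simps)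
  ultimately have "(\<lambda>n. of_nat (Suc n) * a (Suc n - 1) * x ^ Suc n) sums (x * (x * deriv f x + f x))"
    by (simp only:)
  then show ?thesis
    by (rule sums_Suc_imp[rotated]) simp
qed

text \<open>The coefficients of the difference quotient \<open>(f x - f c) / (x - c)\<close> of
  \<open>f x = (\<Sum>n. a n * x ^ n)\<close>.\<close>

definition divdiff_coeffs :: "complex \<Rightarrow> (nat \<Rightarrow> complex) \<Rightarrow> nat \<Rightarrow> complex" where
  "divdiff_coeffs c a n = (\<Sum>k. a (n + k + 1) * c ^ k)"

lemma divdiff_coeffs_norm_le:
  assumes a: "\<And>n. norm (a n) \<le> C" and c: "norm c < 1"
  shows "norm (divdiff_coeffs c a n) \<le> C / (1 - norm c)"
  unfolding divdiff_coeffs_def using a by (intro bounded_power_series_norm_le c)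

lemma divdiff_coeffs_Suc:
  assumes a: "\<And>n. norm (a n) \<le> C" and c: "norm c < 1"
  shows "divdiff_coeffs c a n = a (Suc n) + c * divdiff_coeffs c a (Suc n)"
proof -
  define t where "t = (\<lambda>k. a (n + k + 1) * c ^ k)"
  have "summable t"
    unfolding t_def using a by (intro summable_norm_cancel[OF bounded_power_series_summable] c)
  then have "(\<Sum>k. t (Suc k)) = divdiff_coeffs c a n - a (Suc n)"
    unfolding suminf_split_head[OF \<open>summable t\<close>] by (simp add: t_def divdiff_coeffs_def)
  moreover have "(\<Sum>k. t (Suc k)) = (\<Sum>k. c * (a (Suc n + k + 1) * c ^ k))"
    by (simp add: t_def algebra_simps)
  moreover have "\<dots> = c * divdiff_coeffs c a (Suc n)"
    unfolding divdiff_coeffs_def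
    by (intro suminf_mult summable_norm_cancel[OF bounded_power_series_summable[OF a c]])
  ultimately show ?thesis
    by (simp add: algebra_simps)
qed

lemma bounded_power_series_divdiff:
  fixes a :: "nat \<Rightarrow> complex"
  assumes a: "\<And>n. norm (a n) \<le> C" and c: "norm c < 1" and x: "norm x < 1"
  shows "(\<Sum>n. a n * x ^ n) = (\<Sum>n. a n * c ^ n) + (x - c) * (\<Sum>n. divdiff_coeffs c a n * x ^ n)"
proof -
  define d where "d = divdiff_coeffs c a"
  have d: "norm (d n) \<le> C / (1 - norm c)" for n
    unfolding d_def by (rule divdiff_coeffs_norm_le[OF a c])
  have expand: "(\<Sum>n. a n * y ^ n) = a 0 + c * d 0 + (y - c) * (\<Sum>n. d n * y ^ n)"
    if y: "norm y < 1" for y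
  proof -
    define D where "D = (\<Sum>n. d n * y ^ n)"
    have D: "(\<lambda>n. d n * y ^ n) sums D"
      unfolding D_def by (rule bounded_power_series_sums[OF d y])
    have "(\<lambda>n. y * (d n * y ^ n) - c * (d (Suc n) * y ^ Suc n)) sums (y * D - c * (D - d 0))"
      using D sums_Suc_iff[of "\<lambda>n. d n * y ^ n"] by (intro sums_diff sums_mult) simp_all
    moreover have "y * (d n * y ^ n) - c * (d (Suc n) * y ^ Suc n) = a (Suc n) * y ^ Suc n" for n
      using divdiff_coeffs_Suc[OF a c, where n=n] unfolding d_def by (simp add: algebra_simps)
    ultimately have "(\<lambda>n. a (Suc n) * y ^ Suc n) sums (y * D - c * (D - d 0))"
      by simp
    then have "(\<lambda>n. a n * y ^ n) sums (y * D - c * (D - d 0) + a 0)"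
      using sums_Suc[where f="\<lambda>n. a n * y ^ n"] by simp
    then show ?thesis
      unfolding D_def[symmetric] by (simp add: sums_iff algebra_simps)
  qed
  show ?thesis
    using expand[OF x] expand[OF c] unfolding d_def by simp
qed

section \<open>Series of holomorphic functions in two variables\<close>

locale disc_family =
  fixes g :: "nat \<Rightarrow> complex \<Rightarrow> complex" and C :: real
  assumes holomorphic: "\<And>b. g b holomorphic_on ball 0 1"
    and norm_le: "\<And>b z. norm z < 1 \<Longrightarrow> norm (g b z) \<le> C / (1 - norm z)"
begin

definition ser :: "complex \<Rightarrow> complex \<Rightarrow> complex" where
  "ser z w = (\<Sum>b. g b z * w ^ Suc b)"

lemma norm_term_le:
  assumes z: "norm z \<le> R" and w: "norm w \<le> R" and R: "R < 1"
  shows "norm (g b z * w ^ Suc b) \<le> C / (1 - R) * R ^ Suc b"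
proof -
  have C: "0 \<le> C"
    using norm_le[of 0 0] order_trans[OF norm_ge_zero] by simp
  have "norm (g b z) \<le> C / (1 - norm z)"
    using z R by (intro norm_le) simp
  also have "\<dots> \<le> C / (1 - R)"
    using z R C by (intro divide_left_mono) auto
  finally have "norm (g b z) \<le> C / (1 - R)" .
  moreover have "norm w ^ Suc b \<le> R ^ Suc b"
    using w by (intro power_mono) auto
  ultimately show ?thesis
    unfolding norm_mult norm_power using C R by (intro mult_mono) auto
qed

lemma term_has_field_derivative_comp:
  assumes x: "(x has_field_derivative x') (at t)" and y: "(y has_field_derivative y') (at t)"
    and t: "norm (x t) < 1"
  shows "((\<lambda>t. g b (x t) * y t ^ Suc b) has_field_derivative
           deriv (g b) (x t) * x' * y t ^ Suc b + g b (x t) * (of_nat (Suc b) * y t ^ b * y')) (at t)"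
proof -
  have "g b field_differentiable at (x t)"
    using t by (intro holomorphic_on_imp_differentiable_at[OF holomorphic]) auto
  then have "((\<lambda>t. g b (x t)) has_field_derivative deriv (g b) (x t) * x') (at t)"
    by (intro DERIV_chain2[OF _ x]) (simp add: DERIV_deriv_iff_field_differentiable)
  from DERIV_mult'[OF this DERIV_power[OF y, where n="Suc b"]] show ?thesis
    by (simp add: algebra_simps)
qed

text \<open>No bounds on the derivatives of the \<open>g b\<close> are needed: \<open>series_and_derivative_comparison\<close>
  obtains them from Cauchy's estimates.\<close>

lemma ser_has_field_derivative_comp:
  fixes x y x' y' :: "complex \<Rightarrow> complex"
  assumes x: "\<And>t. (x has_field_derivative x' t) (at t)"
    and y: "\<And>t. (y has_field_derivative y' t) (at t)"
    and t: "norm (x t) < 1" "norm (y t) < 1"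
  shows "\<exists>D. (\<lambda>b. deriv (g b) (x t) * x' t * y t ^ Suc b + g b (x t) * (of_nat (Suc b) * y t ^ b * y' t))
              sums D \<and> ((\<lambda>t. ser (x t) (y t)) has_field_derivative D) (at t)"
proof -
  define R where "R = (1 + max (norm (x t)) (norm (y t))) / 2"
  have R: "R < 1" "norm (x t) < R" "norm (y t) < R"
    using t by (auto simp: R_def)
  define S where "S = {t. norm (x t) < R \<and> norm (y t) < R}"
  have "continuous_on UNIV x" "continuous_on UNIV y"
    using x y by (auto intro!: continuous_at_imp_continuous_on DERIV_isCont)
  then have "open S"
    unfolding S_def by (intro open_Collect_conj open_Collect_less continuous_intros)
  have "t \<in> S"
    using R by (simp add: S_def)
  have "summable (\<lambda>b. C / (1 - R) * R ^ Suc b)"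
    using R(1) order.strict_trans1[OF norm_ge_zero R(2)]
    by (auto intro!: summable_mult summable_Suc_iff[THEN iffD2] summable_geometric)
  moreover have "\<forall>\<^sub>F b in sequentially. \<forall>t\<in>S. norm (g b (x t) * y t ^ Suc b) \<le> C / (1 - R) * R ^ Suc b"
    by (intro always_eventually allI ballI norm_term_le R(1)) (auto simp: S_def)
  moreover have "((\<lambda>t. g b (x t) * y t ^ Suc b) has_field_derivative
      deriv (g b) (x t) * x' t * y t ^ Suc b + g b (x t) * (of_nat (Suc b) * y t ^ b * y' t)) (at t)"
    if "t \<in> S" for b t
    using that R(1) by (intro term_has_field_derivative_comp x y) (simp add: S_def)
  ultimately obtain G G' where G: "\<forall>t\<in>S. (\<lambda>b. g b (x t) * y t ^ Suc b) sums G t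
      \<and> (\<lambda>b. deriv (g b) (x t) * x' t * y t ^ Suc b + g b (x t) * (of_nat (Suc b) * y t ^ b * y' t)) sums G' t
      \<and> (G has_field_derivative G' t) (at t)"
    using series_and_derivative_comparison[OF \<open>open S\<close>, where f="\<lambda>b t. g b (x t) * y t ^ Suc b"
        and f'="\<lambda>b t. deriv (g b) (x t) * x' t * y t ^ Suc b + g b (x t) * (of_nat (Suc b) * y t ^ b * y' t)"]
    by blast
  have G_eq: "G t' = ser (x t') (y t')" if "t' \<in> S" for t'
    using G that by (simp add: ser_def sums_iff)
  have "(G has_field_derivative G' t) (at t)"
    using G \<open>t \<in> S\<close> by blast
  then have "((\<lambda>t. ser (x t) (y t)) has_field_derivative G' t) (at t)"
    by (rule has_field_derivative_transform_within_open[OF _ \<open>open S\<close> \<open>t \<in> S\<close> G_eq])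
  with G \<open>t \<in> S\<close> show ?thesis
    by blast
qed

lemma sums_ser:
  assumes z: "norm z < 1" and w: "norm w < 1"
  shows "(\<lambda>b. g b z * w ^ Suc b) sums ser z w"
proof -
  define R where "R = max (norm z) (norm w)"
  have R: "0 \<le> R" "R < 1"
    using z w by (auto simp: R_def le_max_iff_disj)
  then have "summable (\<lambda>b. C / (1 - R) * R ^ Suc b)"
    by (intro summable_mult summable_Suc_iff[THEN iffD2] summable_geometric) simp
  moreover have "norm (g b z * w ^ Suc b) \<le> C / (1 - R) * R ^ Suc b" for b
    using z w by (intro norm_term_le) (auto simp: R_def)
  ultimately have "summable (\<lambda>b. g b z * w ^ Suc b)"
    by (rule summable_comparison_test')
  then show ?thesis
    unfolding ser_def by (rule summable_sums)
qed

lemma ser_has_field_derivative_fst: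
  assumes "norm z < 1" "norm w < 1"
  shows "((\<lambda>t. ser t w) has_field_derivative deriv (\<lambda>t. ser t w) z) (at z)"
    and "(\<lambda>b. deriv (g b) z * w ^ Suc b) sums deriv (\<lambda>t. ser t w) z"
proof -
  obtain D where "(\<lambda>b. deriv (g b) z * w ^ Suc b) sums D" "((\<lambda>t. ser t w) has_field_derivative D) (at z)"
    using ser_has_field_derivative_comp[of "\<lambda>t. t" "\<lambda>_. 1" "\<lambda>_. w" "\<lambda>_. 0" z, OF DERIV_ident DERIV_const]
      assms
    by simp blast
  then show "((\<lambda>t. ser t w) has_field_derivative deriv (\<lambda>t. ser t w) z) (at z)"
    and "(\<lambda>b. deriv (g b) z * w ^ Suc b) sums deriv (\<lambda>t. ser t w) z"
    using DERIV_imp_deriv by auto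
qed

lemma ser_has_field_derivative_snd:
  assumes "norm z < 1" "norm w < 1"
  shows "((\<lambda>t. ser z t) has_field_derivative deriv (\<lambda>t. ser z t) w) (at w)"
    and "(\<lambda>b. of_nat (Suc b) * g b z * w ^ b) sums deriv (\<lambda>t. ser z t) w"
proof -
  obtain D where "(\<lambda>b. of_nat (Suc b) * g b z * w ^ b) sums D" "((\<lambda>t. ser z t) has_field_derivative D) (at w)"
    using ser_has_field_derivative_comp[of "\<lambda>_. z" "\<lambda>_. 0" "\<lambda>t. t" "\<lambda>_. 1" w, OF DERIV_const DERIV_ident]
      assms
    by (simp add: ac_simps) blast
  then show "((\<lambda>t. ser z t) has_field_derivative deriv (\<lambda>t. ser z t) w) (at w)"
    and "(\<lambda>b. of_nat (Suc b) * g b z * w ^ b) sums deriv (\<lambda>t. ser z t) w"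
    using DERIV_imp_deriv by auto
qed

lemma sums_ser_Euler_snd:
  assumes "norm z < 1" "norm w < 1"
  shows "(\<lambda>b. of_nat (Suc b) * g b z * w ^ Suc b) sums (w * deriv (\<lambda>t. ser z t) w)"
  using sums_mult[OF ser_has_field_derivative_snd(2)[OF assms], of w] by (simp add: ac_simps)

lemma ser_has_field_derivative_diagonal:
  assumes z: "norm z < 1" and zv: "norm (z * v) < 1"
  shows "((\<lambda>t. ser t (t * v)) has_field_derivative
           deriv (\<lambda>t. ser t (z * v)) z + v * deriv (\<lambda>t. ser z t) (z * v)) (at z)"
proof -
  have lin: "((\<lambda>t. t * v) has_field_derivative v) (at t)" for t
    using DERIV_cmult_right[OF DERIV_ident, where c=v] by simp
  obtain D where D: "(\<lambda>b. deriv (g b) z * 1 * (z * v) ^ Suc b + g b z * (of_nat (Suc b) * (z * v) ^ b * v)) sums D"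
    and deriv: "((\<lambda>t. ser t (t * v)) has_field_derivative D) (at z)"
    using ser_has_field_derivative_comp[of "\<lambda>t. t" "\<lambda>_. 1" "\<lambda>t. t * v" "\<lambda>_. v" z, OF DERIV_ident lin]
      assms
    by blast
  have "(\<lambda>b. deriv (g b) z * (z * v) ^ Suc b + v * (of_nat (Suc b) * g b z * (z * v) ^ b)) sums
      (deriv (\<lambda>t. ser t (z * v)) z + v * deriv (\<lambda>t. ser z t) (z * v))"
    by (intro sums_add sums_mult ser_has_field_derivative_fst(2) ser_has_field_derivative_snd(2) z zv)
  with D have "D = deriv (\<lambda>t. ser t (z * v)) z + v * deriv (\<lambda>t. ser z t) (z * v)"
    by (simp add: sums_iff ac_simps)
  with deriv show ?thesis
    by simp
qed

end

section \<open>First-step analysis of the sojourn time\<close>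

declare hit.simps(2) [simp del]

locale batch_params =
  fixes \<rho> q :: real
  assumes rho_pos: "0 < \<rho>" and q_pos: "0 < q" and q_less_1: "q < 1"
begin

definition avg_step :: "(nat \<Rightarrow> nat \<Rightarrow> real) \<Rightarrow> nat \<Rightarrow> nat \<Rightarrow> real" where
  "avg_step g m j = \<rho> / (1 + \<rho>) * (\<Sum>c. (1 - q) * q ^ c * g (m + c + 1) j)
     + 1 / (1 + \<rho>) * (real m / real (m + j) * g (m - 1) j + real j / real (m + j) * g m (j - 1))"

lemma hit_Suc_eq [simp]: "hit \<rho> q (Suc k) m j = (if j = 0 then 0 else avg_step (hit \<rho> q k) m j)"
  by (simp add: avg_step_def hit.simps(2))

lemma geometric_weights: "summable (\<lambda>c. (1 - q) * q ^ c)" "(\<Sum>c. (1 - q) * q ^ c) = 1"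
  using q_pos q_less_1 by (auto intro!: summable_mult summable_geometric simp: suminf_mult suminf_geometric)

lemma geometric_average:
  assumes "\<And>c. 0 \<le> f c \<and> f c \<le> 1"
  shows "summable (\<lambda>c. (1 - q) * q ^ c * f c)" and "0 \<le> (\<Sum>c. (1 - q) * q ^ c * f c)"
    and "(\<Sum>c. (1 - q) * q ^ c * f c) \<le> 1"
proof -
  have le: "(1 - q) * q ^ c * f c \<le> (1 - q) * q ^ c" and nonneg: "0 \<le> (1 - q) * q ^ c * f c" for c
    using assms[of c] q_pos q_less_1 by (simp_all add: mult_left_le)
  show summable: "summable (\<lambda>c. (1 - q) * q ^ c * f c)"
    using nonneg le by (intro summable_comparison_test'[OF geometric_weights(1)]) auto
  show "0 \<le> (\<Sum>c. (1 - q) * q ^ c * f c)"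
    by (rule suminf_nonneg[OF summable nonneg])
  show "(\<Sum>c. (1 - q) * q ^ c * f c) \<le> 1"
    using suminf_le[OF le summable geometric_weights(1)] geometric_weights(2) by simp
qed

lemma avg_step_unit_interval:
  assumes g: "\<And>m j. 0 \<le> g m j \<and> g m j \<le> 1" and j: "j \<noteq> 0"
  shows "0 \<le> avg_step g m j \<and> avg_step g m j \<le> 1"
proof -
  define X where "X = (\<Sum>c. (1 - q) * q ^ c * g (m + c + 1) j)"
  define Y where "Y = real m / real (m + j) * g (m - 1) j + real j / real (m + j) * g m (j - 1)"
  have X: "0 \<le> X" "X \<le> 1"
    unfolding X_def using geometric_average[of "\<lambda>c. g (m + c + 1) j"] g by auto
  have uv: "real m / real (m + j) + real j / real (m + j) = 1"
    using j by (simp add: add_divide_distrib[symmetric])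
  have Y: "0 \<le> Y" "Y \<le> 1"
    unfolding Y_def
     by (intro add_nonneg_nonneg mult_nonneg_nonneg convex_bound_le[OF _ _ _ _ uv]; use g in simp)+
  have "\<rho> / (1 + \<rho>) + 1 / (1 + \<rho>) = 1"
    using rho_pos by (simp add: add_divide_distrib[symmetric])
  then have "\<rho> / (1 + \<rho>) * X + 1 / (1 + \<rho>) * Y \<le> 1"
    using X Y rho_pos by (intro convex_bound_le) auto
  moreover have "0 \<le> \<rho> / (1 + \<rho>) * X + 1 / (1 + \<rho>) * Y"
    using X Y rho_pos by simp
  ultimately show ?thesis
    unfolding avg_step_def X_def[symmetric] Y_def[symmetric] by simp
qed

lemma avg_step_sum:
  assumes g: "\<And>k m j. 0 \<le> g k m j \<and> g k m j \<le> 1"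
  shows "avg_step (\<lambda>m j. \<Sum>k<K. g k m j) m j = (\<Sum>k<K. avg_step (g k) m j)"
proof -
  have "(\<Sum>c. (1 - q) * q ^ c * (\<Sum>k<K. g k (m + c + 1) j))
      = (\<Sum>k<K. \<Sum>c. (1 - q) * q ^ c * g k (m + c + 1) j)"
    unfolding sum_distrib_left using g
    by (intro suminf_sum geometric_average(1)) auto
  then show ?thesis
    unfolding avg_step_def by (simp add: sum.distrib sum_distrib_left add_divide_distrib sum_divide_distrib)
qed

lemma hit_unit_interval: "0 \<le> hit \<rho> q k m j \<and> hit \<rho> q k m j \<le> 1"
proof (induction k arbitrary: m j)
  case 0
  then show ?case by simp
next
  case (Suc k)
  show ?case
    unfolding hit_Suc_eq using avg_step_unit_interval[OF Suc.IH] by simp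
qed

lemma hit_partial_sum_le_1: "(\<Sum>k<K. hit \<rho> q k m j) \<le> 1"
proof (induction K arbitrary: m j)
  case 0
  then show ?case by simp
next
  case (Suc K)
  have "(\<Sum>k<Suc K. hit \<rho> q k m j) = hit \<rho> q 0 m j + (\<Sum>k<K. hit \<rho> q (Suc k) m j)"
    by (rule sum.lessThan_Suc_shift)
  also have "\<dots> \<le> 1"
  proof (cases "j = 0")
    case False
    have "0 \<le> (\<Sum>k<K. hit \<rho> q k m j) \<and> (\<Sum>k<K. hit \<rho> q k m j) \<le> 1" for m j
      using Suc.IH hit_unit_interval by (auto intro: sum_nonneg)
    note partial_sums = avg_step_unit_interval[OF this False]
    have "(\<Sum>k<K. hit \<rho> q (Suc k) m j) = (\<Sum>k<K. avg_step (hit \<rho> q k) m j)"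
      using False by simp
    also have "\<dots> = avg_step (\<lambda>m j. \<Sum>k<K. hit \<rho> q k m j) m j"
      by (rule avg_step_sum[symmetric]) (rule hit_unit_interval)
    finally show ?thesis
      using False partial_sums by simp
  qed simp
  finally show ?case .
qed

lemma hit_summable: "summable (\<lambda>k. hit \<rho> q k m j)"
  using hit_unit_interval by (intro summableI_nonneg_bounded[OF _ hit_partial_sum_le_1]) auto

end

locale batch_lst = batch_params +
  fixes s :: complex
  assumes Re_s_nonneg: "0 \<le> Re s"
begin

definition hold_lst :: complex where
  "hold_lst = of_real (1 + \<rho>) / (of_real (1 + \<rho>) + s)"

lemma hold_lst_denom_nonzero: "of_real (1 + \<rho>) + s \<noteq> 0"
  using rho_pos Re_s_nonneg by (auto simp: complex_eq_iff)

lemma norm_hold_lst_le_1: "norm hold_lst \<le> 1"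
proof -
  define d where "d = of_real (1 + \<rho>) + s"
  have "1 + \<rho> \<le> Re d"
    using Re_s_nonneg by (simp add: d_def)
  also have "\<dots> \<le> norm d"
    by (rule complex_Re_le_cmod)
  finally have "1 + \<rho> \<le> norm d" .
  moreover have "norm hold_lst = (1 + \<rho>) / norm d"
    unfolding hold_lst_def d_def[symmetric] norm_divide norm_of_real using rho_pos by simp
  ultimately show ?thesis
    using rho_pos by (simp add: divide_le_eq_1)
qed

lemma estar_sums: "(\<lambda>k. of_real (hit \<rho> q k n b) * hold_lst ^ k) sums estar \<rho> q s n b"
  and estar_norm_summable: "summable (\<lambda>k. norm (of_real (hit \<rho> q k n b) * hold_lst ^ k))"
proof -
  have "norm (of_real (hit \<rho> q k n b) * hold_lst ^ k) \<le> hit \<rho> q k n b" for k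
    using hit_unit_interval[of k n b] norm_hold_lst_le_1
    by (simp add: norm_mult norm_power mult_left_le power_le_one)
  then show summable: "summable (\<lambda>k. norm (of_real (hit \<rho> q k n b) * hold_lst ^ k))"
    by (intro summable_comparison_test'[OF hit_summable]) simp
  show "(\<lambda>k. of_real (hit \<rho> q k n b) * hold_lst ^ k) sums estar \<rho> q s n b"
    unfolding estar_def hold_lst_def[symmetric] by (rule summable_sums[OF summable_norm_cancel[OF summable]])
qed

lemma norm_estar_le_1: "norm (estar \<rho> q s n b) \<le> 1"
proof -
  have "norm (estar \<rho> q s n b) \<le> (\<Sum>k. norm (of_real (hit \<rho> q k n b) * hold_lst ^ k))"
    unfolding sums_unique[OF estar_sums] by (rule summable_norm[OF estar_norm_summable])
  also have "\<dots> \<le> (\<Sum>k. hit \<rho> q k n b)"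
    using hit_unit_interval norm_hold_lst_le_1
    by (intro suminf_le estar_norm_summable hit_summable)
       (simp add: norm_mult norm_power mult_left_le power_le_one)
  also have "\<dots> \<le> 1"
    by (rule suminf_le_const[OF hit_summable hit_partial_sum_le_1])
  finally show ?thesis .
qed

lemma estar_0: "estar \<rho> q s n 0 = 1"
proof -
  have "hit \<rho> q k n 0 = (if k = 0 then 1 else 0)" for k
    by (cases k) simp_all
  then have "(\<lambda>k. of_real (hit \<rho> q k n 0) * hold_lst ^ k) = (\<lambda>k. if k = 0 then 1 else 0)"
    by auto
  then show ?thesis
    using estar_sums[of n 0] sums_single[of 0 "\<lambda>_. 1::complex"] sums_unique2 by fastforce
qed

lemma arrival_average_sums:
  assumes j: "j \<noteq> 0"
  shows "(\<lambda>k. of_real (\<Sum>c. (1 - q) * q ^ c * hit \<rho> q k (m + c + 1) j) * hold_lst ^ k)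
           sums (\<Sum>c. of_real ((1 - q) * q ^ c) * estar \<rho> q s (m + c + 1) j)"
proof -
  define w where "w k c = (1 - q) * q ^ c * hit \<rho> q k (m + c + 1) j" for k c
  define X where "X k = (\<Sum>c. w k c)" for k
  define a where "a k c = of_real (w k c) * hold_lst ^ k" for k c
  have w: "0 \<le> w k c" for k c
    using q_pos q_less_1 hit_unit_interval[of k "m + c + 1" j] by (simp add: w_def)
  have w_summable: "summable (w k)" for k
    unfolding w_def by (rule geometric_average(1)) (rule hit_unit_interval)
  have norm_a: "norm (a k c) \<le> w k c" for k c
    using w norm_hold_lst_le_1
    by (simp add: a_def norm_mult norm_power mult_left_le power_le_one)
  have X_le: "X k \<le> (1 + \<rho>) / \<rho> * hit \<rho> q (Suc k) m j" for k
  proof -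
    have "0 \<le> avg_step (hit \<rho> q k) m j - \<rho> / (1 + \<rho>) * X k"
      unfolding avg_step_def X_def w_def using hit_unit_interval rho_pos by simp
    then show ?thesis
      using j rho_pos by (simp add: field_simps)
  qed
  have majorant: "summable (\<lambda>k. (1 + \<rho>) / \<rho> * hit \<rho> q (Suc k) m j)"
    by (intro summable_mult summable_Suc_iff[THEN iffD2, OF hit_summable])
  have rows: "summable (\<lambda>c. norm (a k c))" for k
    using norm_a by (intro summable_comparison_test'[OF w_summable]) simp
  have row_le: "(\<Sum>c. norm (a k c)) \<le> X k" for k
    unfolding X_def by (rule suminf_le[OF norm_a rows w_summable])
  have "norm (\<Sum>c. norm (a k c)) \<le> (1 + \<rho>) / \<rho> * hit \<rho> q (Suc k) m j" for k
    using row_le[of k] X_le[of k] suminf_nonneg[OF rows] by simp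
  then have total: "summable (\<lambda>k. \<Sum>c. norm (a k c))"
    by (intro summable_comparison_test'[OF majorant])
  have row_sum: "(\<Sum>c. a k c) = of_real (X k) * hold_lst ^ k" for k
    unfolding a_def X_def suminf_of_real[OF w_summable]
    by (rule suminf_mult2[symmetric]) (rule summable_of_real[OF w_summable])
  have col_sum: "(\<Sum>k. a k c) = of_real ((1 - q) * q ^ c) * estar \<rho> q s (m + c + 1) j" for c
  proof -
    have "(\<lambda>k. a k c) = (\<lambda>k. of_real ((1 - q) * q ^ c) * (of_real (hit \<rho> q k (m + c + 1) j) * hold_lst ^ k))"
      by (simp add: a_def w_def mult.assoc)
    then show ?thesis
      using sums_mult[OF estar_sums, of "of_real ((1 - q) * q ^ c)" "m + c + 1" j] by (simp add: sums_iff)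
  qed
  have "summable (\<lambda>k. \<Sum>c. a k c)"
    by (rule summable_comparison_test'[OF total]) (rule summable_norm[OF rows])
  then have "(\<lambda>k. \<Sum>c. a k c) sums (\<Sum>c. \<Sum>k. a k c)"
    unfolding suminf_swap[OF rows total, symmetric] by (rule summable_sums)
  then show ?thesis
    unfolding row_sum col_sum X_def w_def .
qed

lemma estar_first_step:
  assumes j: "j \<noteq> 0"
  shows "(of_real (1 + \<rho>) + s) * estar \<rho> q s m j =
     of_real \<rho> * (\<Sum>c. of_real ((1 - q) * q ^ c) * estar \<rho> q s (m + c + 1) j)
     + of_real (real m / real (m + j)) * estar \<rho> q s (m - 1) j
     + of_real (real j / real (m + j)) * estar \<rho> q s m (j - 1)"
proof -
  define r1 r2 :: complex where "r1 = of_real (\<rho> / (1 + \<rho>))" and "r2 = of_real (1 / (1 + \<rho>))"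
  define \<alpha> \<beta> :: complex where "\<alpha> = of_real (real m / real (m + j))" and "\<beta> = of_real (real j / real (m + j))"
  define T where "T = (\<Sum>c. of_real ((1 - q) * q ^ c) * estar \<rho> q s (m + c + 1) j)"
  define R where "R = r1 * T + r2 * (\<alpha> * estar \<rho> q s (m - 1) j + \<beta> * estar \<rho> q s m (j - 1))"
  have "(\<lambda>k. r1 * (of_real (\<Sum>c. (1 - q) * q ^ c * hit \<rho> q k (m + c + 1) j) * hold_lst ^ k)
        + r2 * (\<alpha> * (of_real (hit \<rho> q k (m - 1) j) * hold_lst ^ k)
              + \<beta> * (of_real (hit \<rho> q k m (j - 1)) * hold_lst ^ k))) sums R"
    unfolding R_def T_def by (intro sums_add sums_mult arrival_average_sums[OF j] estar_sums)
  then have "(\<lambda>k. of_real (hit \<rho> q (Suc k) m j) * hold_lst ^ k) sums R"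
    using j by (simp add: avg_step_def r1_def r2_def \<alpha>_def \<beta>_def algebra_simps)
  then have "(\<lambda>k. of_real (hit \<rho> q (Suc k) m j) * hold_lst ^ Suc k) sums (hold_lst * R)"
    by (simp add: sums_mult mult.left_commute)
  then have "(\<lambda>k. of_real (hit \<rho> q k m j) * hold_lst ^ k) sums (hold_lst * R)"
    using j by (intro sums_Suc_imp[where f="\<lambda>k. of_real (hit \<rho> q k m j) * hold_lst ^ k"]) simp_all
  then have "estar \<rho> q s m j = hold_lst * R"
    using estar_sums sums_unique2 by blast
  moreover have "(of_real (1 + \<rho>) + s) * hold_lst = of_real (1 + \<rho>)"
    using hold_lst_denom_nonzero by (simp add: hold_lst_def)
  ultimately have "(of_real (1 + \<rho>) + s) * estar \<rho> q s m j = of_real (1 + \<rho>) * R"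
    by (metis mult.assoc)
  also have "\<dots> = (of_real (1 + \<rho>) * r1) * T
      + (of_real (1 + \<rho>) * r2) * (\<alpha> * estar \<rho> q s (m - 1) j + \<beta> * estar \<rho> q s m (j - 1))"
    by (simp only: R_def distrib_left mult.assoc)
  also have "of_real (1 + \<rho>) * r1 = of_real \<rho>"
    using rho_pos by (simp add: r1_def complex_eq_iff flip: of_real_mult)
  also have "of_real (1 + \<rho>) * r2 = 1"
    using rho_pos by (simp add: r2_def complex_eq_iff flip: of_real_mult)
  finally show ?thesis
    by (simp add: T_def \<alpha>_def \<beta>_def)
qed

lemma estar_recurrence:
  assumes j: "j \<noteq> 0"
  shows "(of_real (1 + \<rho>) + s) * (of_nat (m + j) * estar \<rho> q s m j) =
     of_real (\<rho> * (1 - q)) * (of_nat (m + j) * divdiff_coeffs (of_real q) (\<lambda>n. estar \<rho> q s n j) m)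
     + of_nat m * estar \<rho> q s (m - 1) j + of_nat j * estar \<rho> q s m (j - 1)"
proof -
  have "(\<Sum>c. of_real ((1 - q) * q ^ c) * estar \<rho> q s (m + c + 1) j)
      = of_real (1 - q) * divdiff_coeffs (of_real q) (\<lambda>n. estar \<rho> q s n j) m"
  proof -
    have "summable (\<lambda>c. estar \<rho> q s (m + c + 1) j * of_real q ^ c)"
      using q_pos q_less_1
      by (intro summable_norm_cancel[OF bounded_power_series_summable[OF norm_estar_le_1]]) simp
    moreover have "(\<lambda>c. of_real ((1 - q) * q ^ c) * estar \<rho> q s (m + c + 1) j)
        = (\<lambda>c. of_real (1 - q) * (estar \<rho> q s (m + c + 1) j * of_real q ^ c))"
      by (simp add: mult_ac)
    ultimately show ?thesis
      unfolding divdiff_coeffs_def by (simp add: suminf_mult)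
  qed
  moreover have "of_real (real i / real (m + j)) * (of_nat (m + j) * z) = of_nat i * (z :: complex)" for i z
  proof -
    have "of_real (real i / real (m + j)) * (of_nat (m + j) * z) = of_real (real i / real (m + j) * real (m + j)) * z"
      by (simp only: of_real_mult of_real_of_nat_eq mult.assoc)
    also have "real i / real (m + j) * real (m + j) = real i"
      using j by simp
    finally show ?thesis
      by simp
  qed
  ultimately show ?thesis
    using arg_cong[OF estar_first_step[OF j, of m], of "\<lambda>z. of_nat (m + j) * z"]
    by (simp only: distrib_left mult.left_commute[of "of_nat (m + j)"] of_real_mult mult.assoc)
qed

section \<open>Generating functions\<close>

definition egf :: "nat \<Rightarrow> complex \<Rightarrow> complex" where
  "egf b x = (\<Sum>n. estar \<rho> q s n b * x ^ n)"

definition fgf :: "nat \<Rightarrow> complex \<Rightarrow> complex" where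
  "fgf b x = (\<Sum>n. divdiff_coeffs (of_real q) (\<lambda>n. estar \<rho> q s n b) n * x ^ n)"

lemma egf_eq: "egf b = (\<lambda>x. \<Sum>n. estar \<rho> q s n b * x ^ n)"
  by (simp add: egf_def fun_eq_iff)

lemma fgf_eq: "fgf b = (\<lambda>x. \<Sum>n. divdiff_coeffs (of_real q) (\<lambda>n. estar \<rho> q s n b) n * x ^ n)"
  by (simp add: fgf_def fun_eq_iff)

lemma norm_of_real_q: "norm (of_real q :: complex) < 1"
  using q_pos q_less_1 by simp

lemma norm_divdiff_estar_le: "norm (divdiff_coeffs (of_real q) (\<lambda>n. estar \<rho> q s n b) n) \<le> 1 / (1 - q)"
  using divdiff_coeffs_norm_le[OF norm_estar_le_1 norm_of_real_q] q_pos by simp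

lemma egf_divdiff:
  assumes "norm x < 1"
  shows "egf b x = egf b (of_real q) + (x - of_real q) * fgf b x"
  unfolding egf_def fgf_def by (rule bounded_power_series_divdiff[OF norm_estar_le_1 norm_of_real_q assms])

lemma egf_0: "norm x < 1 \<Longrightarrow> egf 0 x = 1 / (1 - x)"
  by (simp add: egf_def estar_0 suminf_geometric)

lemma egf_ode:
  assumes j: "j \<noteq> 0" and x: "norm x < 1"
  shows "(of_real (1 + \<rho>) + s) * (x * deriv (egf j) x + of_nat j * egf j x) =
    of_real (\<rho> * (1 - q)) * (x * deriv (fgf j) x + of_nat j * fgf j x)
    + x * (x * deriv (egf j) x + egf j x) + of_nat j * egf (j - 1) x"
proof -
  define a a' d where "a n = estar \<rho> q s n j" and "a' n = estar \<rho> q s n (j - 1)"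
    and "d n = divdiff_coeffs (of_real q) (\<lambda>n. estar \<rho> q s n j) n" for n
  have egf: "egf j = (\<lambda>x. \<Sum>n. a n * x ^ n)" "egf (j - 1) = (\<lambda>x. \<Sum>n. a' n * x ^ n)"
    and fgf: "fgf j = (\<lambda>x. \<Sum>n. d n * x ^ n)"
    unfolding egf_eq fgf_eq a_def a'_def d_def by (rule refl)+
  have a: "norm (a n) \<le> 1" "norm (a' n) \<le> 1" and d: "norm (d n) \<le> 1 / (1 - q)" for n
    unfolding a_def a'_def d_def by (rule norm_estar_le_1 norm_divdiff_estar_le)+
  have sums: "(\<lambda>n. a n * x ^ n) sums egf j x" "(\<lambda>n. a' n * x ^ n) sums egf (j - 1) x"
      "(\<lambda>n. d n * x ^ n) sums fgf j x"
    unfolding egf fgf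
    by (rule bounded_power_series_sums[OF a(1) x] bounded_power_series_sums[OF a(2) x]
        bounded_power_series_sums[OF d x])+
  define A B :: complex where "A = of_real (1 + \<rho>) + s" and "B = of_real (\<rho> * (1 - q))"
  have "(\<lambda>n. A * (of_nat n * a n * x ^ n + of_nat j * (a n * x ^ n))) sums
      (A * (x * deriv (egf j) x + of_nat j * egf j x))"
    unfolding egf(1) using sums(1)[unfolded egf(1)]
    by (intro sums_mult sums_add bounded_power_series_Euler[OF a(1) x])
  moreover have "(\<lambda>n. B * (of_nat n * d n * x ^ n + of_nat j * (d n * x ^ n))
        + of_nat n * a (n - 1) * x ^ n + of_nat j * (a' n * x ^ n)) sums
      (B * (x * deriv (fgf j) x + of_nat j * fgf j x)
       + x * (x * deriv (egf j) x + egf j x) + of_nat j * egf (j - 1) x)"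
    unfolding egf fgf using sums[unfolded egf fgf]
    by (intro sums_add sums_mult bounded_power_series_Euler[OF d x]
        bounded_power_series_Euler_shift[OF a(1) x])
  moreover have "A * (of_nat n * a n * x ^ n + of_nat j * (a n * x ^ n))
      = B * (of_nat n * d n * x ^ n + of_nat j * (d n * x ^ n))
        + of_nat n * a (n - 1) * x ^ n + of_nat j * (a' n * x ^ n)" for n
  proof -
    have "A * (of_nat (n + j) * a n) = B * (of_nat (n + j) * d n) + of_nat n * a (n - 1) + of_nat j * a' n"
      unfolding A_def B_def a_def a'_def d_def by (rule estar_recurrence[OF j])
    from arg_cong[OF this, of "\<lambda>z. z * x ^ n"] show ?thesis
      by (simp add: algebra_simps)
  qed
  ultimately show ?thesis
    unfolding A_def B_def by (simp add: sums_iff)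
qed

sublocale E: disc_family "\<lambda>b. egf (Suc b)" 1
proof
  show "egf (Suc b) holomorphic_on ball 0 1" for b
    unfolding egf_eq by (rule bounded_power_series_holomorphic[OF norm_estar_le_1])
  show "norm (egf (Suc b) z) \<le> 1 / (1 - norm z)" if "norm z < 1" for b z
    unfolding egf_def by (rule bounded_power_series_norm_le[OF norm_estar_le_1 that])
qed

sublocale F: disc_family "\<lambda>b. fgf (Suc b)" "1 / (1 - q)"
proof
  show "fgf (Suc b) holomorphic_on ball 0 1" for b
    unfolding fgf_eq by (rule bounded_power_series_holomorphic[OF norm_divdiff_estar_le])
  show "norm (fgf (Suc b) z) \<le> 1 / (1 - q) / (1 - norm z)" if "norm z < 1" for b z
    unfolding fgf_def by (rule bounded_power_series_norm_le[OF norm_divdiff_estar_le that])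
qed

lemma EE_eq_ser:
  assumes x: "norm x < 1" and y: "norm y < 1"
  shows "EE \<rho> q s x y = E.ser x y"
proof -
  define c where "c n b = estar \<rho> q s n (Suc b) * x ^ n * y ^ Suc b" for n b
  define K where "K = (\<Sum>b. norm y ^ Suc b)"
  have geom_y: "summable (\<lambda>b. norm y ^ Suc b)"
    using y by (intro summable_Suc_iff[THEN iffD2] summable_geometric) simp
  have norm_c: "norm (c n b) \<le> norm x ^ n * norm y ^ Suc b" for n b
    using norm_estar_le_1[of n "Suc b"]
    by (simp add: c_def norm_mult norm_power mult_left_le_one_le mult.assoc)
  have rows: "summable (\<lambda>b. norm (c n b))" for n
    using norm_c by (intro summable_comparison_test'[OF summable_mult[OF geom_y]]) simp
  have "(\<Sum>b. norm (c n b)) \<le> norm x ^ n * K" for n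
    unfolding K_def suminf_mult[OF geom_y, symmetric]
    by (rule suminf_le[OF norm_c rows summable_mult[OF geom_y]])
  moreover have "summable (\<lambda>n. norm x ^ n * K)"
    using x by (intro summable_mult2 summable_geometric) simp
  ultimately have total: "summable (\<lambda>n. \<Sum>b. norm (c n b))"
    using suminf_nonneg[OF rows] by (intro summable_comparison_test'[OF \<open>summable (\<lambda>n. norm x ^ n * K)\<close>]) simp
  have "(\<Sum>n. c n b) = egf (Suc b) x * y ^ Suc b" for b
    unfolding c_def egf_def
    by (rule suminf_mult2[symmetric, OF summable_norm_cancel[OF bounded_power_series_summable[OF norm_estar_le_1 x]]])
  then show ?thesis
    unfolding EE_def E.ser_def suminf_swap[OF rows total, unfolded c_def] c_def by simp
qed

lemma E_ser_divdiff:
  assumes x: "norm x < 1" and y: "norm y < 1"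
  shows "E.ser x y = E.ser (of_real q) y + (x - of_real q) * F.ser x y"
proof -
  have "(\<lambda>b. egf (Suc b) x * y ^ Suc b - egf (Suc b) (of_real q) * y ^ Suc b)
      sums (E.ser x y - E.ser (of_real q) y)"
    by (intro sums_diff E.sums_ser x y norm_of_real_q)
  moreover have "(\<lambda>b. (x - of_real q) * (fgf (Suc b) x * y ^ Suc b)) sums ((x - of_real q) * F.ser x y)"
    by (intro sums_mult F.sums_ser x y)
  moreover have "(\<lambda>b. egf (Suc b) x * y ^ Suc b - egf (Suc b) (of_real q) * y ^ Suc b)
      = (\<lambda>b. (x - of_real q) * (fgf (Suc b) x * y ^ Suc b))"
    unfolding egf_divdiff[OF x] by (simp add: algebra_simps)
  ultimately have "E.ser x y - E.ser (of_real q) y = (x - of_real q) * F.ser x y"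
    by (metis sums_unique2)
  then show ?thesis
    by (simp add: algebra_simps)
qed

lemma E_ser_deriv_fst_divdiff:
  assumes x: "norm x < 1" and y: "norm y < 1"
  shows "deriv (\<lambda>t. E.ser t y) x = F.ser x y + (x - of_real q) * deriv (\<lambda>t. F.ser t y) x"
proof -
  have "((\<lambda>t. t - of_real q) has_field_derivative 1) (at x)"
    using DERIV_diff[OF DERIV_ident DERIV_const] by simp
  then have "((\<lambda>t. E.ser (of_real q) y + (t - of_real q) * F.ser t y) has_field_derivative
      0 + ((x - of_real q) * deriv (\<lambda>t. F.ser t y) x + 1 * F.ser x y)) (at x)"
    by (intro DERIV_add DERIV_const DERIV_mult' F.ser_has_field_derivative_fst(1) x y)
  moreover have "\<forall>\<^sub>F t in nhds x. E.ser t y = E.ser (of_real q) y + (t - of_real q) * F.ser t y"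
    using eventually_nhds_norm_less[OF x] by (auto elim!: eventually_mono simp: E_ser_divdiff y)
  ultimately show ?thesis
    by (simp add: deriv_cong_ev[OF _ refl] DERIV_imp_deriv)
qed

lemma E_ser_deriv_snd_divdiff:
  assumes x: "norm x < 1" and y: "norm y < 1"
  shows "deriv (\<lambda>t. E.ser x t) y = deriv (\<lambda>t. E.ser (of_real q) t) y + (x - of_real q) * deriv (\<lambda>t. F.ser x t) y"
proof -
  have "((\<lambda>t. E.ser (of_real q) t + (x - of_real q) * F.ser x t) has_field_derivative
      deriv (\<lambda>t. E.ser (of_real q) t) y + (x - of_real q) * deriv (\<lambda>t. F.ser x t) y) (at y)"
    by (intro DERIV_add DERIV_cmult E.ser_has_field_derivative_snd(1) F.ser_has_field_derivative_snd(1)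
        x y norm_of_real_q)
  moreover have "\<forall>\<^sub>F t in nhds y. E.ser x t = E.ser (of_real q) t + (x - of_real q) * F.ser x t"
    using eventually_nhds_norm_less[OF y] by (auto elim!: eventually_mono simp: E_ser_divdiff x)
  ultimately show ?thesis
    by (simp add: deriv_cong_ev[OF _ refl] DERIV_imp_deriv)
qed

lemma FF_eq_ser:
  assumes x: "norm x < 1" and y: "norm y < 1"
  shows "FF \<rho> q s x y = F.ser x y"
proof (cases "x = of_real q")
  case True
  have "\<forall>\<^sub>F t in nhds x. EE \<rho> q s t y = E.ser t y"
    using eventually_nhds_norm_less[OF x] by (auto elim!: eventually_mono simp: EE_eq_ser y)
  then have "deriv (\<lambda>t. EE \<rho> q s t y) x = F.ser x y"
    using E_ser_deriv_fst_divdiff[OF x y] True by (simp add: deriv_cong_ev[OF _ refl])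
  with True show ?thesis
    by (simp add: FF_def)
next
  case False
  then show ?thesis
    using E_ser_divdiff[OF x y] by (simp add: FF_def EE_eq_ser[OF x y] EE_eq_ser[OF norm_of_real_q y])
qed

lemma EF_pde:
  assumes x: "norm x < 1" and y: "norm y < 1"
  shows "(of_real (1 + \<rho>) + s) * (x * deriv (\<lambda>t. E.ser t y) x + y * deriv (\<lambda>t. E.ser x t) y) =
    of_real (\<rho> * (1 - q)) * (x * deriv (\<lambda>t. F.ser t y) x + y * deriv (\<lambda>t. F.ser x t) y)
    + x * (x * deriv (\<lambda>t. E.ser t y) x + E.ser x y)
    + y * (1 / (1 - x) + E.ser x y + y * deriv (\<lambda>t. E.ser x t) y)"
proof -
  define A B :: complex where "A = of_real (1 + \<rho>) + s" and "B = of_real (\<rho> * (1 - q))"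
  have shift: "(\<lambda>b. of_nat (Suc b) * egf b x * y ^ Suc b) sums
      (y * (1 / (1 - x) + E.ser x y + y * deriv (\<lambda>t. E.ser x t) y))"
  proof -
    have "(\<lambda>b. y * (of_nat (Suc b) * egf (Suc b) x * y ^ Suc b + egf (Suc b) x * y ^ Suc b))
        sums (y * (y * deriv (\<lambda>t. E.ser x t) y + E.ser x y))"
      by (intro sums_mult sums_add E.sums_ser_Euler_snd E.sums_ser x y)
    then have "(\<lambda>b. of_nat (Suc (Suc b)) * egf (Suc b) x * y ^ Suc (Suc b))
        sums (y * (y * deriv (\<lambda>t. E.ser x t) y + E.ser x y))"
      by (simp add: algebra_simps)
    from sums_Suc[OF this] show ?thesis
      using egf_0[OF x] by (simp add: algebra_simps)
  qed
  have "(\<lambda>b. A * (x * (deriv (egf (Suc b)) x * y ^ Suc b) + of_nat (Suc b) * egf (Suc b) x * y ^ Suc b))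
      sums (A * (x * deriv (\<lambda>t. E.ser t y) x + y * deriv (\<lambda>t. E.ser x t) y))"
    by (intro sums_mult sums_add E.ser_has_field_derivative_fst(2) E.sums_ser_Euler_snd x y)
  moreover have "(\<lambda>b. B * (x * (deriv (fgf (Suc b)) x * y ^ Suc b) + of_nat (Suc b) * fgf (Suc b) x * y ^ Suc b)
        + x * (x * (deriv (egf (Suc b)) x * y ^ Suc b) + egf (Suc b) x * y ^ Suc b)
        + of_nat (Suc b) * egf b x * y ^ Suc b)
      sums (B * (x * deriv (\<lambda>t. F.ser t y) x + y * deriv (\<lambda>t. F.ser x t) y)
        + x * (x * deriv (\<lambda>t. E.ser t y) x + E.ser x y)
        + y * (1 / (1 - x) + E.ser x y + y * deriv (\<lambda>t. E.ser x t) y))"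
    by (intro sums_add sums_mult shift E.ser_has_field_derivative_fst(2) F.ser_has_field_derivative_fst(2)
        E.sums_ser_Euler_snd F.sums_ser_Euler_snd E.sums_ser x y)
  moreover have "A * (x * (deriv (egf (Suc b)) x * y ^ Suc b) + of_nat (Suc b) * egf (Suc b) x * y ^ Suc b)
      = B * (x * (deriv (fgf (Suc b)) x * y ^ Suc b) + of_nat (Suc b) * fgf (Suc b) x * y ^ Suc b)
        + x * (x * (deriv (egf (Suc b)) x * y ^ Suc b) + egf (Suc b) x * y ^ Suc b)
        + of_nat (Suc b) * egf b x * y ^ Suc b" for b
    using arg_cong[OF egf_ode[OF _ x, of "Suc b"], of "\<lambda>z. z * y ^ Suc b"]
    by (simp add: A_def B_def algebra_simps)
  ultimately show ?thesis
    unfolding A_def B_def by (simp add: sums_iff)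
qed

lemma deriv_FF_fst:
  assumes "norm x < 1" "norm y < 1"
  shows "deriv (\<lambda>t. FF \<rho> q s t y) x = deriv (\<lambda>t. F.ser t y) x"
  using eventually_nhds_norm_less[OF assms(1)]
  by (intro deriv_cong_ev) (auto elim!: eventually_mono simp: FF_eq_ser assms(2))

lemma deriv_FF_snd:
  assumes "norm x < 1" "norm y < 1"
  shows "deriv (\<lambda>t. FF \<rho> q s x t) y = deriv (\<lambda>t. F.ser x t) y"
  using eventually_nhds_norm_less[OF assms(2)]
  by (intro deriv_cong_ev) (auto elim!: eventually_mono simp: FF_eq_ser assms(1))

lemma deriv_EE_snd:
  assumes "norm x < 1" "norm y < 1"
  shows "deriv (\<lambda>t. EE \<rho> q s x t) y = deriv (\<lambda>t. E.ser x t) y"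
  using eventually_nhds_norm_less[OF assms(2)]
  by (intro deriv_cong_ev) (auto elim!: eventually_mono simp: EE_eq_ser assms(1))

lemma FF_pde:
  assumes u: "norm u < 1" and w: "norm w < 1"
  shows "u * (2 * u - (s + 1 + of_real \<rho> + of_real q)) * FF \<rho> q s u w
      + u * PP \<rho> q s u * deriv (\<lambda>t. FF \<rho> q s t w) u
      + (PP \<rho> q s u - (u - of_real q) * (u - w)) * w * deriv (\<lambda>t. FF \<rho> q s u t) w
      + (u - of_real q) * w * FF \<rho> q s u w + LL \<rho> q s u w = 0"
proof -
  define E0 E1 E2 where "E0 = E.ser u w" and "E1 = deriv (\<lambda>t. E.ser t w) u"
    and "E2 = deriv (\<lambda>t. E.ser u t) w"
  define F0 F1 F2 where "F0 = F.ser u w" and "F1 = deriv (\<lambda>t. F.ser t w) u"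
    and "F2 = deriv (\<lambda>t. F.ser u t) w"
  define G0 G2 where "G0 = E.ser (of_real q) w" and "G2 = deriv (\<lambda>t. E.ser (of_real q) t) w"
  define c where "c = 1 / (1 - u)"
  have kernel: "(of_real (1 + \<rho>) + s) * (u * E1 + w * E2) =
      of_real (\<rho> * (1 - q)) * (u * F1 + w * F2) + u * (u * E1 + E0) + w * (c + E0 + w * E2)"
    unfolding E0_def E1_def E2_def F1_def F2_def c_def by (rule EF_pde[OF u w])
  have rel: "E0 = G0 + (u - of_real q) * F0" "E1 = F0 + (u - of_real q) * F1"
      "E2 = G2 + (u - of_real q) * F2"
    unfolding E0_def E1_def E2_def F0_def F1_def F2_def G0_def G2_def
    by (rule E_ser_divdiff[OF u w] E_ser_deriv_fst_divdiff[OF u w] E_ser_deriv_snd_divdiff[OF u w])+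
  have "LL \<rho> q s u w = w * c + (u + w) * G0 - w * (s + 1 + of_real \<rho> - w) * G2"
    unfolding LL_def G0_def G2_def c_def
    by (simp add: EE_eq_ser[OF norm_of_real_q w] deriv_EE_snd[OF norm_of_real_q w])
  moreover have "FF \<rho> q s u w = F0" "deriv (\<lambda>t. FF \<rho> q s t w) u = F1"
      "deriv (\<lambda>t. FF \<rho> q s u t) w = F2"
    unfolding F0_def F1_def F2_def by (rule FF_eq_ser[OF u w] deriv_FF_fst[OF u w] deriv_FF_snd[OF u w])+
  ultimately show ?thesis
    using kernel rel unfolding PP_def by (simp add: power2_eq_square) algebra
qed

section \<open>The equation for \<open>\<Phi>\<close>\<close>

lemma PP_has_field_derivative:
  "(PP \<rho> q s has_field_derivative 2 * u - (s + 1 + of_real \<rho> + of_real q)) (at u)"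
  unfolding PP_def[abs_def] by (auto intro!: derivative_eq_intros simp: power2_eq_square algebra_simps)

lemma Phi_has_field_derivative_fst:
  assumes u: "norm u < 1" and v: "norm v < 1"
  shows "((\<lambda>t. Phi \<rho> q s t v) has_field_derivative
      PP \<rho> q s u * (1 - v) * (deriv (\<lambda>t. FF \<rho> q s t (u * v)) u + v * deriv (\<lambda>t. FF \<rho> q s u t) (u * v))
      + (2 * u - (s + 1 + of_real \<rho> + of_real q)) * (1 - v) * FF \<rho> q s u (u * v)) (at u)"
proof -
  have uv: "norm (u * v) < 1"
    by (rule norm_mult_less_1[OF u v])
  have "((\<lambda>t. PP \<rho> q s t * (1 - v) * F.ser t (t * v)) has_field_derivative
      PP \<rho> q s u * (1 - v) * (deriv (\<lambda>t. F.ser t (u * v)) u + v * deriv (\<lambda>t. F.ser u t) (u * v))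
      + (2 * u - (s + 1 + of_real \<rho> + of_real q)) * (1 - v) * F.ser u (u * v)) (at u)"
    by (intro DERIV_mult' DERIV_cmult_right PP_has_field_derivative F.ser_has_field_derivative_diagonal u uv)
  moreover have "PP \<rho> q s t * (1 - v) * F.ser t (t * v) = Phi \<rho> q s t v" if "norm t < 1" for t
    using FF_eq_ser[OF that norm_mult_less_1[OF that v]] by (simp add: Phi_def)
  then have "\<forall>\<^sub>F t in nhds u. PP \<rho> q s t * (1 - v) * F.ser t (t * v) = Phi \<rho> q s t v"
    by (rule eventually_mono[OF eventually_nhds_norm_less[OF u]])
  ultimately show ?thesis
    unfolding FF_eq_ser[OF u uv] deriv_FF_fst[OF u uv] deriv_FF_snd[OF u uv]
    by (simp only: DERIV_cong_ev[OF refl _ refl])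
qed

lemma Phi_has_field_derivative_snd:
  assumes u: "norm u < 1" and v: "norm v < 1"
  shows "((\<lambda>t. Phi \<rho> q s u t) has_field_derivative
      PP \<rho> q s u * ((1 - v) * (deriv (\<lambda>t. FF \<rho> q s u t) (u * v) * u) + - 1 * FF \<rho> q s u (u * v))) (at v)"
proof -
  have uv: "norm (u * v) < 1"
    by (rule norm_mult_less_1[OF u v])
  have "((\<lambda>t. F.ser u (u * t)) has_field_derivative deriv (\<lambda>t. F.ser u t) (u * v) * u) (at v)"
    using DERIV_chain2[OF F.ser_has_field_derivative_snd(1)[OF u uv] DERIV_cmult[OF DERIV_ident, of u]]
    by simp
  moreover have "((\<lambda>t. 1 - t) has_field_derivative - 1) (at v)"
    using DERIV_diff[OF DERIV_const DERIV_ident] by simp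
  ultimately have "((\<lambda>t. PP \<rho> q s u * ((1 - t) * F.ser u (u * t))) has_field_derivative
      PP \<rho> q s u * ((1 - v) * (deriv (\<lambda>t. F.ser u t) (u * v) * u) + - 1 * F.ser u (u * v))) (at v)"
    by (intro DERIV_cmult DERIV_mult')
  moreover have "PP \<rho> q s u * ((1 - t) * F.ser u (u * t)) = Phi \<rho> q s u t" if "norm t < 1" for t
    using FF_eq_ser[OF u norm_mult_less_1[OF u that]] by (simp add: Phi_def mult.assoc)
  then have "\<forall>\<^sub>F t in nhds v. PP \<rho> q s u * ((1 - t) * F.ser u (u * t)) = Phi \<rho> q s u t"
    by (rule eventually_mono[OF eventually_nhds_norm_less[OF v]])
  ultimately show ?thesis
    unfolding FF_eq_ser[OF u uv] deriv_FF_snd[OF u uv]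
    by (simp only: DERIV_cong_ev[OF refl _ refl])
qed

lemma Phi_pde:
  assumes u: "norm u < 1" and v: "norm v < 1" and "u \<noteq> 0" and "PP \<rho> q s u \<noteq> 0"
  shows "deriv (\<lambda>w. Phi \<rho> q s w v) u
      - (u - of_real q) / PP \<rho> q s u * v * (1 - v) * deriv (\<lambda>w. Phi \<rho> q s u w) v
      + calL \<rho> q s u v = 0"
proof -
  have "u * (deriv (\<lambda>w. Phi \<rho> q s w v) u
         - (u - of_real q) / PP \<rho> q s u * v * (1 - v) * deriv (\<lambda>w. Phi \<rho> q s u w) v
         + calL \<rho> q s u v)
      = (1 - v) * (u * (2 * u - (s + 1 + of_real \<rho> + of_real q)) * FF \<rho> q s u (u * v)
      + u * PP \<rho> q s u * deriv (\<lambda>t. FF \<rho> q s t (u * v)) u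
      + (PP \<rho> q s u - (u - of_real q) * (u - u * v)) * (u * v) * deriv (\<lambda>t. FF \<rho> q s u t) (u * v)
      + (u - of_real q) * (u * v) * FF \<rho> q s u (u * v) + LL \<rho> q s u (u * v))"
    using assms
    unfolding DERIV_imp_deriv[OF Phi_has_field_derivative_fst[OF u v]]
      DERIV_imp_deriv[OF Phi_has_field_derivative_snd[OF u v]] calL_def
    by (simp add: field_simps)
  also have "\<dots> = 0"
    using FF_pde[OF u norm_mult_less_1[OF u v]] by simp
  finally show ?thesis
    using \<open>u \<noteq> 0\<close> by simp
qed

end

lemma calL_eq:
  assumes "u \<noteq> 0" "u \<noteq> 1"
  shows "calL \<rho> q s u v = (1 - v) * (v / (1 - u) + (1 + v) * EE \<rho> q s (of_real q) (u * v)
      - v * (s + 1 + of_real \<rho> - u * v) * deriv (\<lambda>w. EE \<rho> q s (of_real q) w) (u * v))"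
  using assms unfolding calL_def LL_def by (simp add: field_simps)

theorem mainTheorem5:
  fixes \<rho> q :: real and s u v :: complex
  assumes "\<rho> > 0" and "0 < q" and "q < 1" and "\<rho> + q < 1"
    and "Re s \<ge> 0"
    and "norm u < 1" and "norm v < 1" and "u \<noteq> 0"
    and "PP \<rho> q s u \<noteq> 0"
  shows "(\<lambda>w. Phi \<rho> q s w v) field_differentiable at u
       \<and> (\<lambda>w. Phi \<rho> q s u w) field_differentiable at v
       \<and> deriv (\<lambda>w. Phi \<rho> q s w v) u
         - (u - of_real q) / PP \<rho> q s u * v * (1 - v) * deriv (\<lambda>w. Phi \<rho> q s u w) v
         + calL \<rho> q s u v = 0
       \<and> calL \<rho> q s u v = (1 - v) * (v / (1 - u) + (1 + v) * EE \<rho> q s (of_real q) (u * v)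
           - v * (s + 1 + of_real \<rho> - u * v) * deriv (\<lambda>w. EE \<rho> q s (of_real q) w) (u * v))"
proof -
  interpret batch_lst \<rho> q s
    using assms by unfold_locales auto
  have "u \<noteq> 1"
    using \<open>norm u < 1\<close> by auto
  then show ?thesis
    using Phi_has_field_derivative_fst[of u v] Phi_has_field_derivative_snd[of u v] Phi_pde[of u v]
      calL_eq[of u] assms
    unfolding field_differentiable_def by blast
qed

end
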